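(* Let $m\ge 1$, and let $a_1,\dots,a_m\in[-1,1]$ with $\sum_{i=1}^m a_i=0$; set $p_i=(1+a_i)/m$. Let $X_1,\dots,X_n$ be i.i.d. on $[m]$ with $\Pr(X_1=i)=p_i$, let $h(x,y)=\mathbb{1}(x=y)$, $U_n=\binom{n}{2}^{-1}\sum_{1\le i<j\le n}h(X_i,X_j)$, and $\hat h(i)=\frac{1}{n-1}\sum_{j\ne i}h(X_i,X_j)$ for $i\in[n]$. Let $\gamma\in(0,1)$, assume $n\ge 16/\gamma$, and set $\xi=\frac{6}{m}+\frac{8\log(4n/\gamma)}{n}$. Then with probability at least $1-\gamma$, $|\hat h(i)-U_n|\le\xi$ for all $i\in[n]$. *)

theory Defs
  imports "HOL-Probability.Probability"
begin

definition hker :: "nat \<Rightarrow> nat \<Rightarrow> real" where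
  "hker x y = (if x = y then 1 else 0)"

text \<open>U-statistic U_n for the sample X_0,...,X_{n-1} (indices shifted to 0-based).\<close>
definition Ustat :: "(nat \<Rightarrow> nat) \<Rightarrow> nat \<Rightarrow> real" where
  "Ustat X n = (\<Sum>i<n. \<Sum>j\<in>{i<..<n}. hker (X i) (X j)) / real (n choose 2)"

definition hhat :: "(nat \<Rightarrow> nat) \<Rightarrow> nat \<Rightarrow> nat \<Rightarrow> real" where
  "hhat X n i = (\<Sum>j\<in>{..<n} - {i}. hker (X i) (X j)) / (real n - 1)"

end

theory Submission
  imports Defs
begin

text \<open>
  Conditionally on \<open>X\<^sub>i = y\<close>, the number of matches \<open>\<Sum>\<^sub>j\<^sub>\<noteq>\<^sub>i h(X\<^sub>i, X\<^sub>j)\<close> is a sum of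
  \<open>n - 1\<close> independent Bernoulli variables with mean \<open>p\<^sub>y \<le> 2/m\<close>. A Chernoff bound with
  exponential moment \<open>exp(1/2)\<close> shows \<open>Pr(hhat(i) \<ge> c) \<le> \<gamma>/(4n)\<close> for
  \<open>c = 3/m + 4 log(4n/\<gamma>)/n\<close>, so by the union bound \<open>hhat(i) < c\<close> for all \<open>i\<close> with
  probability at least \<open>1 - \<gamma>\<close>. On that event \<open>0 \<le> hhat(i) \<le> c\<close> and, since each pair is
  counted in the leave-one-out sums, \<open>0 \<le> U\<^sub>n \<le> 2c = \<xi>\<close>.
\<close>

lemma hker_nonneg: "0 \<le> hker x y"
  by (simp add: hker_def)

lemma real_choose_two: "real (n choose 2) = real n * (real n - 1) / 2"
proof (cases n)
  case (Suc k)
  have "even (n * (n - 1))" by (cases "even n") auto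
  then show ?thesis
    using Suc by (auto simp: choose_two real_of_nat_div of_nat_diff algebra_simps)
qed simp

lemma hhat_nonneg: "0 \<le> hhat X n i"
  by (cases "n = 0") (auto simp: hhat_def hker_nonneg intro!: divide_nonneg_nonneg sum_nonneg)

lemma Ustat_nonneg: "0 \<le> Ustat X n"
  by (simp add: Ustat_def hker_nonneg sum_nonneg)

lemma Ustat_le_twice_hhat_bound:
  assumes n: "2 \<le> n" and bound: "\<forall>i<n. hhat X n i \<le> c"
  shows "Ustat X n \<le> 2 * c"
proof -
  have n1: "real n - 1 > 0" using n by simp
  have "(\<Sum>i<n. \<Sum>j\<in>{i<..<n}. hker (X i) (X j)) \<le> (\<Sum>i<n. \<Sum>j\<in>{..<n} - {i}. hker (X i) (X j))"
    by (intro sum_mono sum_mono2) (auto simp: hker_nonneg)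
  also have "\<dots> = (\<Sum>i<n. (real n - 1) * hhat X n i)"
    using n1 by (simp add: hhat_def)
  also have "\<dots> \<le> (\<Sum>i<n. (real n - 1) * c)"
    using bound n1 by (intro sum_mono mult_left_mono) auto
  finally have "(\<Sum>i<n. \<Sum>j\<in>{i<..<n}. hker (X i) (X j)) \<le> (real n * (real n - 1) / 2) * (2 * c)"
    by simp
  moreover have "0 < real n * (real n - 1) / 2" using n1 n by simp
  ultimately show ?thesis
    unfolding Ustat_def real_choose_two by (simp only: pos_divide_le_eq mult.commute)
qed

lemma abs_hhat_minus_Ustat_le:
  assumes "2 \<le> n" and bound: "\<forall>i<n. hhat X n i \<le> c" and "i < n"
  shows "\<bar>hhat X n i - Ustat X n\<bar> \<le> 2 * c"
  using Ustat_le_twice_hhat_bound[OF assms(1,2)] bound[rule_format, OF assms(3)]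
    hhat_nonneg[of X n i] Ustat_nonneg[of X n]
  by (simp add: abs_le_iff)

lemma nn_integral_point_weight:
  fixes D :: "'a pmf"
  assumes "c \<ge> 1"
  shows "(\<integral>\<^sup>+z. ennreal (if z = y then c else 1) \<partial>D) = ennreal (1 + (c - 1) * pmf D y)"
proof -
  have "(\<integral>\<^sup>+z. ennreal (if z = y then c else 1) \<partial>D)
      = (\<integral>\<^sup>+z. 1 + ennreal (c - 1) * indicator {y} z \<partial>D)"
  proof (intro nn_integral_cong)
    fix z
    have "ennreal c = ennreal 1 + ennreal (c - 1)"
      using assms by (subst ennreal_plus[symmetric]) auto
    then show "ennreal (if z = y then c else 1) = 1 + ennreal (c - 1) * indicator {y} z"
      by (simp add: indicator_def)
  qed
  also have "\<dots> = 1 + ennreal (c - 1) * pmf D y"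
    by (simp add: nn_integral_add nn_integral_cmult emeasure_pmf_single)
  also have "\<dots> = ennreal (1 + (c - 1) * pmf D y)"
    using assms by (subst ennreal_plus) (auto simp: ennreal_mult)
  finally show ?thesis .
qed

lemma nn_integral_exp_matches_le:
  fixes D :: "nat pmf" and A :: "nat set"
  assumes fin: "finite A" and iA: "i \<notin> A" and pq: "\<And>y. pmf D y \<le> q" and \<theta>: "0 \<le> \<theta>"
  shows "(\<integral>\<^sup>+X. ennreal (\<Prod>j\<in>A. exp (\<theta> * hker (X i) (X j))) \<partial>Pi_pmf (insert i A) 0 (\<lambda>_. D))
          \<le> ennreal ((1 + (exp \<theta> - 1) * q) ^ card A)"
proof -
  define s where "s = exp \<theta>"
  have s1: "1 \<le> s" using \<theta> by (simp add: s_def)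
  have "(\<integral>\<^sup>+X. ennreal (\<Prod>j\<in>A. exp (\<theta> * hker (X i) (X j))) \<partial>Pi_pmf (insert i A) 0 (\<lambda>_. D))
      = (\<integral>\<^sup>+y. \<integral>\<^sup>+f. ennreal (\<Prod>j\<in>A. exp (\<theta> * hker ((f(i:=y)) i) ((f(i:=y)) j)))
           \<partial>Pi_pmf A 0 (\<lambda>_. D) \<partial>D)"
    by (simp add: Pi_pmf_insert[OF fin iA] nn_integral_pair_pmf' case_prod_unfold cong: if_cong)
  also have "\<dots> = (\<integral>\<^sup>+y. \<integral>\<^sup>+f. (\<Prod>j\<in>A. ennreal (if f j = y then s else 1)) \<partial>Pi_pmf A 0 (\<lambda>_. D) \<partial>D)"
  proof (intro nn_integral_cong)
    fix y f
    have "(\<Prod>j\<in>A. exp (\<theta> * hker ((f(i:=y)) i) ((f(i:=y)) j))) = (\<Prod>j\<in>A. if f j = y then s else 1)"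
      using iA by (intro prod.cong) (auto simp: hker_def s_def)
    then show "ennreal (\<Prod>j\<in>A. exp (\<theta> * hker ((f(i:=y)) i) ((f(i:=y)) j)))
        = (\<Prod>j\<in>A. ennreal (if f j = y then s else 1))"
      using s1 by (simp add: prod_ennreal)
  qed
  also have "\<dots> = (\<integral>\<^sup>+y. ennreal ((1 + (s - 1) * pmf D y) ^ card A) \<partial>D)"
    using s1 by (intro nn_integral_cong, subst nn_integral_prod_Pi_pmf[OF fin])
      (simp add: nn_integral_point_weight ennreal_power del: ennreal_plus)
  also have "\<dots> \<le> (\<integral>\<^sup>+y. ennreal ((1 + (s - 1) * q) ^ card A) \<partial>D)"
    using s1 pq by (intro nn_integral_mono ennreal_leI power_mono) (auto intro: mult_left_mono)
  finally show ?thesis by (simp add: s_def)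
qed

lemma prob_matches_ge_le:
  fixes D :: "nat pmf" and A :: "nat set"
  assumes fin: "finite A" and iA: "i \<notin> A" and pq: "\<And>y. pmf D y \<le> q" and \<theta>: "0 \<le> \<theta>"
  shows "measure (Pi_pmf (insert i A) 0 (\<lambda>_. D)) {X. t \<le> (\<Sum>j\<in>A. hker (X i) (X j))}
          \<le> exp (- \<theta> * t) * (1 + (exp \<theta> - 1) * q) ^ card A"
proof -
  define M where "M = measure_pmf (Pi_pmf (insert i A) 0 (\<lambda>_. D))"
  define u where "u X = ennreal (\<Prod>j\<in>A. exp (\<theta> * hker (X i) (X j)))" for X :: "nat \<Rightarrow> nat"
  define B where "B = (1 + (exp \<theta> - 1) * q) ^ card A"
  have "0 \<le> q" using pq[of 0] pmf_nonneg[of D 0] by linarith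
  then have B0: "0 \<le> B" using \<theta> by (simp add: B_def)
  have u_exp: "u X = ennreal (exp (\<theta> * (\<Sum>j\<in>A. hker (X i) (X j))))" for X
    by (simp add: u_def exp_sum[OF fin] sum_distrib_left)
  have "{X. t \<le> (\<Sum>j\<in>A. hker (X i) (X j))} \<subseteq> {X \<in> space M. 1 \<le> ennreal (exp (- \<theta> * t)) * u X}"
  proof safe
    fix X assume "t \<le> (\<Sum>j\<in>A. hker (X i) (X j))"
    then have "1 \<le> exp (- \<theta> * t) * exp (\<theta> * (\<Sum>j\<in>A. hker (X i) (X j)))"
      using \<theta> by (simp add: exp_add[symmetric] mult_left_mono)
    then show "1 \<le> ennreal (exp (- \<theta> * t)) * u X"
      by (simp add: u_exp ennreal_mult[symmetric])
  qed (simp add: M_def)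
  then have "emeasure M {X. t \<le> (\<Sum>j\<in>A. hker (X i) (X j))}
      \<le> emeasure M {X \<in> space M. 1 \<le> ennreal (exp (- \<theta> * t)) * u X}"
    by (rule emeasure_mono) (simp add: M_def)
  also have "\<dots> \<le> ennreal (exp (- \<theta> * t)) * (\<integral>\<^sup>+X. u X * indicator (space M) X \<partial>M)"
    by (rule nn_integral_Markov_inequality) (auto simp: M_def)
  also have "\<dots> \<le> ennreal (exp (- \<theta> * t)) * ennreal B"
    unfolding M_def u_def B_def
    by (simp add: mult_left_mono nn_integral_exp_matches_le[OF fin iA pq \<theta>])
  finally show ?thesis
    using B0 by (simp add: M_def B_def measure_pmf.emeasure_eq_measure ennreal_mult[symmetric])
qed

lemma exp_half_le: "exp (1/2 :: real) \<le> 7/4"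
proof -
  have "exp (1/2 :: real)^2 = exp 1"
    by (simp add: power2_eq_square mult_exp_exp)
  also have "\<dots> \<le> (7/4)^2" by (rule order.trans[OF exp_le]) (simp add: power2_eq_square)
  finally show ?thesis by (rule power2_le_imp_le) simp
qed

lemma prob_hhat_ge_le:
  fixes D :: "nat pmf"
  assumes pq: "\<And>y. pmf D y \<le> q" and n: "2 \<le> n" and i: "i < n"
  shows "measure (Pi_pmf {..<n} 0 (\<lambda>_. D)) {X. c \<le> hhat X n i}
          \<le> exp (- (real n - 1) * (c / 2 - 3 / 4 * q))"
proof -
  define A where "A = {..<n} - {i}"
  have A: "finite A" "i \<notin> A" "insert i A = {..<n}" "card A = n - 1"
    using i by (auto simp: A_def)
  have q0: "0 \<le> q" using pq[of 0] pmf_nonneg[of D 0] by linarith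
  have n1: "real n - 1 > 0" using n by simp
  have "{X. c \<le> hhat X n i} = {X. (real n - 1) * c \<le> (\<Sum>j\<in>A. hker (X i) (X j))}"
    using n1 by (auto simp: hhat_def A_def le_divide_eq mult.commute)
  then have "measure (Pi_pmf {..<n} 0 (\<lambda>_. D)) {X. c \<le> hhat X n i}
      \<le> exp (- (1/2) * ((real n - 1) * c)) * (1 + (exp (1/2) - 1) * q) ^ (n - 1)"
    using prob_matches_ge_le[OF A(1,2) pq, of "1/2"] A by simp
  also have "(1 + (exp (1/2) - 1) * q) ^ (n - 1) \<le> exp ((exp (1/2) - 1) * q) ^ (n - 1)"
    using q0 by (intro power_mono exp_ge_add_one_self add_nonneg_nonneg mult_nonneg_nonneg) auto
  also have "\<dots> = exp ((real n - 1) * ((exp (1/2) - 1) * q))"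
    using n by (simp add: exp_of_nat_mult[symmetric] of_nat_diff)
  also have "\<dots> \<le> exp ((real n - 1) * (3 / 4 * q))"
    using exp_half_le q0 n1 by (intro exp_mono mult_left_mono mult_right_mono) auto
  finally have "measure (Pi_pmf {..<n} 0 (\<lambda>_. D)) {X. c \<le> hhat X n i}
      \<le> exp (- (1/2) * ((real n - 1) * c)) * exp ((real n - 1) * (3 / 4 * q))"
    by (simp add: mult_left_mono)
  also have "\<dots> = exp (- (real n - 1) * (c / 2 - 3 / 4 * q))"
    unfolding mult_exp_exp by (rule arg_cong[where f = exp]) (simp add: field_simps)
  finally show ?thesis .
qed

lemma prob_hhat_ge_threshold_le:
  fixes D :: "nat pmf"
  assumes pq: "\<And>y. pmf D y \<le> 2 / real m" and n: "2 \<le> n" and i: "i < n" and L: "0 \<le> L"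
  shows "measure (Pi_pmf {..<n} 0 (\<lambda>_. D)) {X. 3 / real m + 4 * L / real n \<le> hhat X n i} \<le> exp (- L)"
proof -
  have "measure (Pi_pmf {..<n} 0 (\<lambda>_. D)) {X. 3 / real m + 4 * L / real n \<le> hhat X n i}
      \<le> exp (- (real n - 1) * ((3 / real m + 4 * L / real n) / 2 - 3 / 4 * (2 / real m)))"
    using pq n i by (rule prob_hhat_ge_le)
  also have "\<dots> = exp (- (2 * (real n - 1) / real n) * L)"
    using n by (intro arg_cong[where f = exp]) (simp add: field_simps)
  also have "\<dots> \<le> exp (- L)"
    using n L by (intro exp_mono) (simp add: field_simps mult_left_mono)
  finally show ?thesis .
qed

lemma pmf_le_two_div:
  fixes D :: "nat pmf"
  assumes m: "m \<ge> 1"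
    and a_bound: "\<forall>i\<in>{1..m}. -1 \<le> a i \<and> a i \<le> 1"
    and a_sum: "(\<Sum>i=1..m. a i) = 0"
    and D: "\<forall>i\<in>{1..m}. pmf D i = (1 + a i) / real m"
  shows "pmf D y \<le> 2 / real m"
proof (cases "y \<in> {1..m}")
  case True
  then show ?thesis using a_bound D by (auto simp: divide_right_mono)
next
  case False
  have "(\<Sum>i=1..m. pmf D i) = (\<Sum>i=1..m. (1 + a i) / real m)"
    using D by (intro sum.cong) auto
  also have "\<dots> = 1"
    using a_sum m by (simp add: sum_divide_distrib[symmetric] sum.distrib)
  finally have "measure D {1..m} = 1" by (simp add: measure_measure_pmf_finite)
  then have "measure D (UNIV - {1..m}) = 0" using measure_pmf.prob_compl[of "{1..m}" D] by simp
  moreover have "pmf D y \<le> measure D (UNIV - {1..m})"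
    using False by (simp add: measure_pmf_single[symmetric] measure_pmf.finite_measure_mono)
  ultimately show ?thesis by simp
qed

theorem lemmaA19:
  fixes m n :: nat and a :: "nat \<Rightarrow> real" and \<gamma> :: real and D :: "nat pmf"
  assumes "m \<ge> 1"
    and "\<forall>i\<in>{1..m}. -1 \<le> a i \<and> a i \<le> 1"
    and "(\<Sum>i=1..m. a i) = 0"
    and "\<forall>i\<in>{1..m}. pmf D i = (1 + a i) / real m"
    and "0 < \<gamma>" and "\<gamma> < 1"
    and "real n \<ge> 16 / \<gamma>"
  shows "measure_pmf.prob (Pi_pmf {..<n} 0 (\<lambda>_. D))
           {X. \<forall>i<n. \<bar>hhat X n i - Ustat X n\<bar>
                 \<le> 6 / real m + 8 * ln (4 * real n / \<gamma>) / real n} \<ge> 1 - \<gamma>"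
proof -
  define P where "P = Pi_pmf {..<n} 0 (\<lambda>_. D)"
  define L where "L = ln (4 * real n / \<gamma>)"
  define c where "c = 3 / real m + 4 * L / real n"
  define Bad where "Bad = (\<Union>i<n. {X. c \<le> hhat X n i})"
  have "16 < 16 / \<gamma>" using assms(5,6) by (simp add: less_divide_eq)
  then have n: "16 < real n" using assms(7) by linarith
  have L: "0 \<le> L" using assms(5,6) n by (simp add: L_def le_divide_eq)
  have "measure P {X. c \<le> hhat X n i} \<le> \<gamma> / real n" if "i < n" for i
  proof -
    have "measure P {X. c \<le> hhat X n i} \<le> exp (- L)"
      unfolding P_def c_def using n L that
      by (intro prob_hhat_ge_threshold_le pmf_le_two_div[OF assms(1-4)]) auto
    also have "\<dots> = \<gamma> / (4 * real n)"
      using assms(5) n by (simp add: L_def exp_minus exp_ln)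
    also have "\<dots> \<le> \<gamma> / real n"
      using assms(5) n by (intro divide_left_mono) auto
    finally show ?thesis .
  qed
  then have "measure P Bad \<le> (\<Sum>i<n. \<gamma> / real n)"
    unfolding Bad_def by (intro order.trans[OF measure_pmf.finite_measure_subadditive_finite] sum_mono) auto
  then have "1 - \<gamma> \<le> measure P (UNIV - Bad)"
    using n measure_pmf.prob_compl[of Bad P] by simp
  also have "\<dots> \<le> measure P {X. \<forall>i<n. \<bar>hhat X n i - Ustat X n\<bar> \<le> 2 * c}"
  proof (intro measure_pmf.finite_measure_mono subsetI CollectI allI impI)
    fix X i assume "X \<in> UNIV - Bad" and "i < n"
    then have "\<forall>i<n. hhat X n i \<le> c" by (auto simp: Bad_def not_le less_imp_le)
    then show "\<bar>hhat X n i - Ustat X n\<bar> \<le> 2 * c"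
      using abs_hhat_minus_Ustat_le \<open>i < n\<close> n by simp
  qed simp
  finally show ?thesis by (simp add: P_def c_def L_def)
qed

end
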